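(* Let $n>1$ be an integer and $S=S_1\cup S_2\subseteq U_{6n}$ with $S_1=\langle a^2\rangle\setminus\{1\}$ and $S_2=\{a^{2r+1},\ a^{2r+1}b\mid 0\le r\le n-1\}$. Then $\mathrm{Cay}(U_{6n},S)$ is a connected integral graph whose spectrum (eigenvalues with multiplicities) is $\{[-n-1]^1,[-1]^{6n-4},[2n-1]^2,[3n-1]^1\}$.
   Context: For an integer $n\ge1$, $U_{6n}=\langle a,b\mid a^{2n}=b^3=1,\ a^{-1}ba=b^{-1}\rangle$, a group of order $6n$. For a group $G$ and $S\subseteq G$ with $1\notin S=S^{-1}$, the Cayley graph $\mathrm{Cay}(G,S)$ has vertex set $G$ and edges $\{g,sg\}$ for $g\in G,s\in S$. A graph is integral if all eigenvalues of its adjacency matrix are integers. $[\lambda]^m$ denotes eigenvalue $\lambda$ with multiplicity $m$. *)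

theory Defs
  imports "HOL-Algebra.Group" "Jordan_Normal_Form.Char_Poly"
begin

text \<open>Concrete model of U_{6n} = <a,b | a^(2n) = b^3 = 1, a^-1 b a = b^-1>.
  The pair (i,j) with i < 2n, j < 3 stands for a^i b^j.  Since b^j a^k = a^k b^((-1)^k j),
  (a^i b^j)(a^k b^l) = a^(i+k) b^((-1)^k j + l).\<close>

definition U :: "nat \<Rightarrow> (nat \<times> nat) monoid" where
  "U n = \<lparr> carrier = {0..<2*n} \<times> {0..<3},
           mult = (\<lambda>(i,j) (k,l). ((i + k) mod (2*n),
                     ((if even k then j else (3 - j) mod 3) + l) mod 3)),
           one = (0, 0) \<rparr>"

definition gen_a :: "nat \<times> nat" where "gen_a = (1, 0)"
definition gen_b :: "nat \<times> nat" where "gen_b = (0, 1)"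

definition cay_adj :: "('a, 'b) monoid_scheme \<Rightarrow> 'a set \<Rightarrow> 'a \<Rightarrow> 'a \<Rightarrow> bool" where
  "cay_adj G S g h \<longleftrightarrow> g \<in> carrier G \<and> h \<in> carrier G \<and>
      ((\<exists>s\<in>S. h = s \<otimes>\<^bsub>G\<^esub> g) \<or> (\<exists>s\<in>S. g = s \<otimes>\<^bsub>G\<^esub> h))"

definition cay_connected :: "('a, 'b) monoid_scheme \<Rightarrow> 'a set \<Rightarrow> bool" where
  "cay_connected G S \<longleftrightarrow>
     (\<forall>g\<in>carrier G. \<forall>h\<in>carrier G. (g, h) \<in> {(x, y). cay_adj G S x y}\<^sup>*)"

definition U_vertex :: "nat \<Rightarrow> nat \<times> nat" where
  "U_vertex k = (k div 3, k mod 3)"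

definition U_adj_matrix :: "nat \<Rightarrow> (nat \<times> nat) set \<Rightarrow> complex mat" where
  "U_adj_matrix n S = mat (6*n) (6*n)
     (\<lambda>(p, q). if cay_adj (U n) S (U_vertex p) (U_vertex q) then 1 else 0)"

end

theory Submission
  imports Defs
begin

text \<open>Write the vertex a^i b^j as the index 3i + j. Two vertices are adjacent iff they are distinct and
  their indices are related by a relation that only depends on the indices modulo 6, so the adjacency
  matrix is J \<otimes> B - I with J the n \<times> n all-ones matrix and B a 0/1 matrix of size 6 with spectrum
  3, 2, 2, 0, 0, -1. Conjugating J and B by explicit matrices turns J \<otimes> B into a lower triangular
  matrix with diagonal n \<cdot> (3, 2, 2, 0, 0, -1) followed by zeros, which yields the characteristic
  polynomial; it splits into integer linear factors, so all eigenvalues are integers. Connectivity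
  follows from the path 1, a b, b, a b^2, b^2 together with the edges joining b^j to every a^i b^j.\<close>

lemma U_mult:
  "(i, j) \<otimes>\<^bsub>U n\<^esub> (k, l) = ((i + k) mod (2 * n), ((if even k then j else (3 - j) mod 3) + l) mod 3)"
  by (simp add: U_def)

lemma carrier_U: "carrier (U n) = {0..<2 * n} \<times> {0..<3}"
  by (simp add: U_def)

lemma one_U: "\<one>\<^bsub>U n\<^esub> = (0, 0)"
  by (simp add: U_def)

lemma gen_a_pow_U: "gen_a [^]\<^bsub>U n\<^esub> k = (k mod (2 * n), 0)"
  by (induction k) (simp_all add: one_U gen_a_def U_mult mod_Suc_eq)

definition conn_set :: "nat \<Rightarrow> (nat \<times> nat) set" where
  "conn_set n = {(x, 0 :: nat) | x. x < 2 * n \<and> even x \<and> x \<noteq> 0} \<union> {(x, y) | x y. x < 2 * n \<and> odd x \<and> y \<le> 1}"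

lemma even_powers_gen_a_U:
  assumes "0 < n"
  shows "{gen_a [^]\<^bsub>U n\<^esub> (2 * k) | k. k \<in> (UNIV :: nat set)} = {(x, 0 :: nat) | x. x < 2 * n \<and> even x}"
proof (intro Set.set_eqI iffI)
  fix z assume "z \<in> {gen_a [^]\<^bsub>U n\<^esub> (2 * k) | k. k \<in> (UNIV :: nat set)}"
  then obtain k where "z = ((2 * k) mod (2 * n), 0)"
    by (auto simp: gen_a_pow_U)
  then show "z \<in> {(x, 0 :: nat) | x. x < 2 * n \<and> even x}"
    using assms by (auto simp: mod_mult_mult1)
next
  fix z assume "z \<in> {(x, 0 :: nat) | x. x < 2 * n \<and> even x}"
  then obtain x where "z = (x, 0)" "x < 2 * n" "even x"
    by auto
  then have "z = gen_a [^]\<^bsub>U n\<^esub> (2 * (x div 2))"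
    by (simp add: gen_a_pow_U)
  then show "z \<in> {gen_a [^]\<^bsub>U n\<^esub> (2 * k) | k. k \<in> (UNIV :: nat set)}"
    by blast
qed

lemma odd_powers_gen_a_U:
  assumes "0 < n"
  shows "{gen_a [^]\<^bsub>U n\<^esub> (2 * r + 1) | r. r \<le> n - 1}
           \<union> {gen_a [^]\<^bsub>U n\<^esub> (2 * r + 1) \<otimes>\<^bsub>U n\<^esub> gen_b | r. r \<le> n - 1}
         = {(x, y) | x y. x < 2 * n \<and> odd x \<and> y \<le> 1}"
    (is "?A \<union> ?B = ?C")
proof -
  have bound: "r \<le> n - 1 \<longleftrightarrow> 2 * r + 1 < 2 * n" for r
    using assms by linarith
  have pow: "gen_a [^]\<^bsub>U n\<^esub> (2 * r + 1) = (2 * r + 1, 0)"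
    and pow_b: "gen_a [^]\<^bsub>U n\<^esub> (2 * r + 1) \<otimes>\<^bsub>U n\<^esub> gen_b = (2 * r + 1, 1)"
    if "r \<le> n - 1" for r
    using that bound[of r] by (simp_all del: nat_pow_Suc add: gen_a_pow_U gen_b_def U_mult)
  show ?thesis
  proof (intro Set.set_eqI iffI)
    fix z assume "z \<in> ?A \<union> ?B"
    then obtain r where "r \<le> n - 1" "z = (2 * r + 1, 0) \<or> z = (2 * r + 1, 1)"
      using pow pow_b by blast
    then show "z \<in> ?C"
      using bound by auto
  next
    fix z assume "z \<in> ?C"
    then obtain x y where z: "z = (x, y)" "x < 2 * n" "odd x" "y \<le> 1"
      by blast
    then obtain r where r: "x = 2 * r + 1" "r \<le> n - 1"
      using bound by (metis oddE)
    show "z \<in> ?A \<union> ?B"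
    proof (cases "y = 0")
      case True
      then have "z = gen_a [^]\<^bsub>U n\<^esub> (2 * r + 1)"
        using z r pow by simp
      then show ?thesis using r by blast
    next
      case False
      then have "z = gen_a [^]\<^bsub>U n\<^esub> (2 * r + 1) \<otimes>\<^bsub>U n\<^esub> gen_b"
        using z r pow_b by simp
      then show ?thesis using r by blast
    qed
  qed
qed

lemma conn_set_eq:
  assumes "0 < n"
  shows "({gen_a [^]\<^bsub>U n\<^esub> (2 * k) | k. k \<in> (UNIV :: nat set)} - {\<one>\<^bsub>U n\<^esub>})
           \<union> ({gen_a [^]\<^bsub>U n\<^esub> (2 * r + 1) | r. r \<le> n - 1}
           \<union> {gen_a [^]\<^bsub>U n\<^esub> (2 * r + 1) \<otimes>\<^bsub>U n\<^esub> gen_b | r. r \<le> n - 1}) = conn_set n"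
  unfolding even_powers_gen_a_U[OF assms] odd_powers_gen_a_U[OF assms] one_U conn_set_def
  by blast

definition U_index :: "nat \<times> nat \<Rightarrow> nat" where
  "U_index g = 3 * fst g + snd g"

lemma U_index_U_vertex [simp]: "U_index (U_vertex p) = p"
  by (simp add: U_index_def U_vertex_def)

lemma U_vertex_in_carrier: "p < 6 * n \<Longrightarrow> U_vertex p \<in> carrier (U n)"
  by (auto simp: U_vertex_def carrier_U)

text \<open>Left multiplication by a^x b^y with x odd changes the parity of the a-exponent and moves the
  b-exponent by +y from even and by -y from odd vertices; the other elements of the connection set keep
  the b-exponent.\<close>
definition block_rel :: "nat \<Rightarrow> nat \<Rightarrow> bool" where
  "block_rel p q \<longleftrightarrow>
     (if even (p div 3) = even (q div 3) then p mod 3 = q mod 3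
      else if even (p div 3) then q mod 3 = p mod 3 \<or> q mod 3 = (p mod 3 + 1) mod 3
      else p mod 3 = q mod 3 \<or> p mod 3 = (q mod 3 + 1) mod 3)"

lemma block_rel_sym: "block_rel p q \<longleftrightarrow> block_rel q p"
  by (auto simp: block_rel_def)

lemma block_rel_refl: "block_rel p p"
  by (simp add: block_rel_def)

lemma block_rel_mod_6: "block_rel (p mod 6) (q mod 6) \<longleftrightarrow> block_rel p q"
proof -
  have "p mod 6 div 3 = p div 3 mod 2" "p mod 6 mod 3 = p mod 3" for p :: nat
    using mod_mult2_eq[of p 3 2] mod_mod_cancel[of 3 6 p] by simp_all
  then show ?thesis
    by (simp add: block_rel_def)
qed

lemma block_rel_U_index:
  assumes "j < 3" "j' < 3"
  shows "block_rel (U_index (i, j)) (U_index (i', j')) \<longleftrightarrow>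
     (if even i = even i' then j = j'
      else if even i then j' = j \<or> j' = (j + 1) mod 3
      else j = j' \<or> j = (j' + 1) mod 3)"
  using assms by (simp add: block_rel_def U_index_def)

lemma even_mod_double_iff: "even ((a :: nat) mod (2 * n)) \<longleftrightarrow> even a"
  by (simp add: even_iff_mod_2_eq_zero mod_mod_cancel)

lemma conn_set_mult:
  assumes "g \<in> carrier (U n)" "s \<in> conn_set n"
  shows "s \<otimes>\<^bsub>U n\<^esub> g \<noteq> g \<and> block_rel (U_index g) (U_index (s \<otimes>\<^bsub>U n\<^esub> g))"
proof -
  obtain i j where g: "g = (i, j)" "i < 2 * n" "j < 3"
    using assms(1) by (auto simp: carrier_U)
  obtain x y where s: "s = (x, y)" "x < 2 * n" "y \<le> 1" "odd x \<or> (x \<noteq> 0 \<and> y = 0)"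
    using assms(2) by (auto simp: conn_set_def)
  define i' where "i' = (x + i) mod (2 * n)"
  define j' where "j' = ((if even i then y else (3 - y) mod 3) + j) mod 3"
  have prod: "s \<otimes>\<^bsub>U n\<^esub> g = (i', j')"
    by (simp add: g s U_mult i'_def j'_def)
  have parity: "even i' \<longleftrightarrow> (even i \<longleftrightarrow> even x)"
    by (auto simp: i'_def even_mod_double_iff)
  have cases_j: "j = 0 \<or> j = 1 \<or> j = 2" "y = 0 \<or> y = 1"
    using g s by auto
  show ?thesis
  proof (cases "odd x")
    case True
    then have "i' \<noteq> i" "even i' \<noteq> even i"
      using parity by auto
    moreover have "j' = j \<or> j' = (j + 1) mod 3" if "even i"
      using that cases_j by (auto simp: j'_def)
    moreover have "j = j' \<or> j = (j' + 1) mod 3" if "odd i"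
      using that cases_j by (auto simp: j'_def)
    ultimately show ?thesis
      using g prod by (simp add: block_rel_U_index j'_def)
  next
    case False
    then have "x \<noteq> 0" "y = 0" "even i' = even i"
      using s parity by auto
    moreover have "i' \<noteq> i"
      using \<open>x \<noteq> 0\<close> g s by (auto simp: i'_def mod_if)
    moreover have "j' = j"
      using \<open>y = 0\<close> g by (simp add: j'_def)
    ultimately show ?thesis
      using g prod by (simp add: block_rel_U_index j'_def)
  qed
qed

lemma conn_set_mult_exists:
  assumes "g \<in> carrier (U n)" "h \<in> carrier (U n)" "g \<noteq> h" "block_rel (U_index g) (U_index h)"
  shows "\<exists>s \<in> conn_set n. h = s \<otimes>\<^bsub>U n\<^esub> g"
proof -
  obtain i j where g: "g = (i, j)" "i < 2 * n" "j < 3"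
    using assms(1) by (auto simp: carrier_U)
  obtain i' j' where h: "h = (i', j')" "i' < 2 * n" "j' < 3"
    using assms(2) by (auto simp: carrier_U)
  define x where "x = (i' + 2 * n - i) mod (2 * n)"
  have x: "x < 2 * n" "(x + i) mod (2 * n) = i'"
    using g h by (simp_all add: x_def mod_add_left_eq)
  have parity: "even x \<longleftrightarrow> (even i \<longleftrightarrow> even i')"
    using g by (auto simp: x_def even_mod_double_iff)
  have rel: "if even i = even i' then j = j'
      else if even i then j' = j \<or> j' = (j + 1) mod 3
      else j = j' \<or> j = (j' + 1) mod 3"
    using assms(4) g h by (simp add: block_rel_U_index)
  show ?thesis
  proof (cases "even i = even i'")
    case True
    then have "j = j'"
      using rel by simp
    have "x \<noteq> 0"
    proof
      assume "x = 0"
      then have "i' = i"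
        using x g by simp
      then show False
        using \<open>j = j'\<close> g h assms(3) by simp
    qed
    then have "(x, 0) \<in> conn_set n" "h = (x, 0) \<otimes>\<^bsub>U n\<^esub> g"
      using \<open>j = j'\<close> True parity x g h by (auto simp: conn_set_def U_mult)
    then show ?thesis by blast
  next
    case False
    define y where "y = (if j = j' then 0 else 1 :: nat)"
    have "j' \<in> {0, 1, 2}"
      using h by auto
    then have "j' = ((if even i then y else (3 - y) mod 3) + j) mod 3"
      using False rel by (auto simp: y_def)
    then have "h = (x, y) \<otimes>\<^bsub>U n\<^esub> g"
      using x g h by (simp add: U_mult)
    moreover have "(x, y) \<in> conn_set n"
      using False parity x by (auto simp: conn_set_def y_def)
    ultimately show ?thesis by blast
  qed
qed

lemma cay_adj_conn_set_iff:
  "cay_adj (U n) (conn_set n) g h \<longleftrightarrow>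
     g \<in> carrier (U n) \<and> h \<in> carrier (U n) \<and> g \<noteq> h \<and> block_rel (U_index g) (U_index h)"
  using conn_set_mult[of g n] conn_set_mult[of h n] conn_set_mult_exists[of g n h]
  unfolding cay_adj_def by (metis block_rel_sym)

definition kron_mat :: "nat \<Rightarrow> nat \<Rightarrow> (nat \<Rightarrow> nat \<Rightarrow> 'a :: times) \<Rightarrow> (nat \<Rightarrow> nat \<Rightarrow> 'a) \<Rightarrow> 'a mat" where
  "kron_mat n m f g = mat (m * n) (m * n) (\<lambda>(p, q). f (p div m) (q div m) * g (p mod m) (q mod m))"

definition diag_fun :: "(nat \<Rightarrow> 'a :: zero) \<Rightarrow> nat \<Rightarrow> nat \<Rightarrow> 'a" where
  "diag_fun d i k = (if i = k then d i else 0)"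

lemma kron_mat_carrier [simp]: "kron_mat n m f g \<in> carrier_mat (m * n) (m * n)"
  by (simp add: kron_mat_def)

lemma sum_lessThan_mult_nat: "(\<Sum>k < m * n. h k) = (\<Sum>j < n. \<Sum>b < m. h (m * j + b))"
  for m n :: nat
proof -
  have "(\<Sum>k < m * n. h k) = (\<Sum>j < n. sum h {j * m..<j * m + m})"
    using sum.nat_group[of h m n] by (simp add: mult.commute)
  also have "\<dots> = (\<Sum>j < n. \<Sum>b < m. h (m * j + b))"
  proof (rule sum.cong[OF refl])
    fix j
    have "sum h {j * m..<j * m + m} = sum (\<lambda>b. h (b + j * m)) {0..<m}"
      using sum.shift_bounds_nat_ivl[of h 0 "j * m" m] by (simp add: add.commute)
    then show "sum h {j * m..<j * m + m} = (\<Sum>b < m. h (m * j + b))"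
      by (simp add: atLeast0LessThan ac_simps)
  qed
  finally show ?thesis .
qed

lemma prod_lessThan_mult_nat: "(\<Prod>k < m * n. h k) = (\<Prod>j < n. \<Prod>b < m. h (m * j + b))"
  for m n :: nat
proof -
  have "(\<Prod>k < m * n. h k) = (\<Prod>j < n. prod h {j * m..<j * m + m})"
    using prod.nat_group[of h m n] by (simp add: mult.commute)
  also have "\<dots> = (\<Prod>j < n. \<Prod>b < m. h (m * j + b))"
  proof (rule prod.cong[OF refl])
    fix j
    have "prod h {j * m..<j * m + m} = prod (\<lambda>b. h (b + j * m)) {0..<m}"
      using prod.shift_bounds_nat_ivl[of h 0 "j * m" m] by (simp add: add.commute)
    then show "prod h {j * m..<j * m + m} = (\<Prod>b < m. h (m * j + b))"
      by (simp add: atLeast0LessThan ac_simps)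
  qed
  finally show ?thesis .
qed

lemma kron_mat_mult:
  "kron_mat n m f g * kron_mat n m f' g'
     = kron_mat n m (\<lambda>i k. \<Sum>j < n. f i j * f' j k) (\<lambda>a c. \<Sum>b < m. g a b * g' b c :: 'a :: comm_semiring_0)"
proof (rule eq_matI)
  fix p q assume "p < dim_row (kron_mat n m (\<lambda>i k. \<Sum>j < n. f i j * f' j k) (\<lambda>a c. \<Sum>b < m. g a b * g' b c))"
    "q < dim_col (kron_mat n m (\<lambda>i k. \<Sum>j < n. f i j * f' j k) (\<lambda>a c. \<Sum>b < m. g a b * g' b c))"
  then have pq: "p < m * n" "q < m * n" by (auto simp: kron_mat_def)
  then have "(kron_mat n m f g * kron_mat n m f' g') $$ (p, q)
      = (\<Sum>k < m * n. f (p div m) (k div m) * g (p mod m) (k mod m) * (f' (k div m) (q div m) * g' (k mod m) (q mod m)))"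
    by (simp add: kron_mat_def scalar_prod_def atLeast0LessThan)
  also have "\<dots> = (\<Sum>j < n. \<Sum>b < m. f (p div m) j * g (p mod m) b * (f' j (q div m) * g' b (q mod m)))"
    by (subst sum_lessThan_mult_nat) (intro sum.cong refl; simp)
  also have "\<dots> = (\<Sum>j < n. f (p div m) j * f' j (q div m)) * (\<Sum>b < m. g (p mod m) b * g' b (q mod m))"
    by (simp add: sum_product ac_simps)
  finally show "(kron_mat n m f g * kron_mat n m f' g') $$ (p, q)
      = kron_mat n m (\<lambda>i k. \<Sum>j < n. f i j * f' j k) (\<lambda>a c. \<Sum>b < m. g a b * g' b c) $$ (p, q)"
    using pq by (simp add: kron_mat_def)
qed (simp_all add: kron_mat_def)

lemma kron_mat_cong:
  assumes "\<And>i k. i < n \<Longrightarrow> k < n \<Longrightarrow> f i k = f' i k" "\<And>a c. a < m \<Longrightarrow> c < m \<Longrightarrow> g a c = g' a c"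
  shows "kron_mat n m f g = kron_mat n m f' g'"
proof -
  have "p div m < n" "p mod m < m" if "p < m * n" for p
  proof -
    from that have "0 < m" by (cases m) auto
    with that show "p div m < n" "p mod m < m"
      by (simp_all add: less_mult_imp_div_less mult.commute)
  qed
  then show ?thesis
    unfolding kron_mat_def by (intro eq_matI) (simp_all add: assms)
qed

lemma kron_mat_one:
  "kron_mat n m (diag_fun (\<lambda>_. 1)) (diag_fun (\<lambda>_. 1)) = (1\<^sub>m (m * n) :: 'a :: semiring_1 mat)"
proof (rule eq_matI)
  fix p q assume "p < dim_row (1\<^sub>m (m * n) :: 'a mat)" "q < dim_col (1\<^sub>m (m * n) :: 'a mat)"
  moreover have "p div m = q div m \<and> p mod m = q mod m \<longleftrightarrow> p = q"
    by (metis div_mult_mod_eq)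
  ultimately show "kron_mat n m (diag_fun (\<lambda>_. 1)) (diag_fun (\<lambda>_. 1)) $$ (p, q)
      = (1\<^sub>m (m * n) :: 'a mat) $$ (p, q)"
    by (auto simp: kron_mat_def diag_fun_def)
qed (simp_all add: kron_mat_def)

definition block_mat :: "nat \<Rightarrow> nat \<Rightarrow> 'a :: zero_neq_one" where
  "block_mat c d = (if block_rel c d then 1 else 0)"

lemma U_adj_matrix_conn_set:
  "U_adj_matrix n (conn_set n) = kron_mat n 6 (\<lambda>_ _. 1) block_mat - 1\<^sub>m (6 * n)"
proof (rule eq_matI)
  fix p q assume "p < dim_row (kron_mat n 6 (\<lambda>_ _. 1) block_mat - 1\<^sub>m (6 * n) :: complex mat)"
    "q < dim_col (kron_mat n 6 (\<lambda>_ _. 1) block_mat - 1\<^sub>m (6 * n) :: complex mat)"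
  then have "p < 6 * n" "q < 6 * n" by auto
  moreover have "U_vertex p = U_vertex q \<longleftrightarrow> p = q"
    by (metis U_index_U_vertex)
  ultimately show "U_adj_matrix n (conn_set n) $$ (p, q) = (kron_mat n 6 (\<lambda>_ _. 1) block_mat - 1\<^sub>m (6 * n)) $$ (p, q)"
    by (simp add: U_adj_matrix_def kron_mat_def block_mat_def cay_adj_conn_set_iff U_vertex_in_carrier
        block_rel_mod_6 block_rel_refl)
qed (simp_all add: U_adj_matrix_def kron_mat_def)

text \<open>The columns of ones_shear are e_0 and e_k - e_0 for 0 < k; conjugating the all-ones matrix by
  it leaves a single nonzero column, (n, 1, ..., 1).\<close>
definition ones_shear :: "nat \<Rightarrow> nat \<Rightarrow> 'a :: ring_1" where
  "ones_shear i j = (if i = 0 then (if j = 0 then 1 else -1) else if i = j then 1 else 0)"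

definition ones_shear_inv :: "nat \<Rightarrow> nat \<Rightarrow> 'a :: ring_1" where
  "ones_shear_inv i j = (if i = 0 then 1 else if i = j then 1 else 0)"

definition ones_triangular :: "nat \<Rightarrow> nat \<Rightarrow> nat \<Rightarrow> 'a :: ring_1" where
  "ones_triangular n i k = (if k = 0 then (if i = 0 then of_nat n else 1) else 0)"

lemma sum_lessThan_split_zero: "0 < n \<Longrightarrow> (\<Sum>j < n. f j) = f 0 + (\<Sum>j \<in> {1..<n}. f j)"
  for n :: nat
  by (simp add: lessThan_atLeast0 sum.atLeast_Suc_lessThan)

lemma sum_ones_shear_row:
  assumes "i < n"
  shows "(\<Sum>j < n. ones_shear i j * f j) = (if i = 0 then f 0 - (\<Sum>j \<in> {1..<n}. f j) else f i)"
proof (cases "i = 0")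
  case True
  have "(\<Sum>j \<in> {1..<n}. ones_shear 0 j * f j) = - (\<Sum>j \<in> {1..<n}. f j)"
    by (simp add: ones_shear_def sum_negf)
  with True assms show ?thesis
    by (simp add: sum_lessThan_split_zero ones_shear_def)
next
  case False
  have "(\<Sum>j < n. ones_shear i j * f j) = (\<Sum>j < n. if i = j then f i else 0)"
    by (intro sum.cong) (auto simp: ones_shear_def False)
  with False assms show ?thesis by simp
qed

lemma sum_ones_shear_inv_row:
  assumes "i < n"
  shows "(\<Sum>j < n. ones_shear_inv i j * f j) = (if i = 0 then f 0 + (\<Sum>j \<in> {1..<n}. f j) else f i)"
proof (cases "i = 0")
  case True
  with assms show ?thesis
    by (simp add: sum_lessThan_split_zero ones_shear_inv_def)
next
  case False
  have "(\<Sum>j < n. ones_shear_inv i j * f j) = (\<Sum>j < n. if i = j then f i else 0)"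
    by (intro sum.cong) (auto simp: ones_shear_inv_def False)
  with False assms show ?thesis by simp
qed

lemma sum_delta_atLeast1:
  "(\<Sum>j \<in> {1..<n}. if j = k then c else 0) = (if 1 \<le> k \<and> k < n then c else (0 :: 'a :: comm_monoid_add))"
  for n k :: nat
proof -
  have "(\<Sum>j \<in> {1..<n}. if j = k then c else 0) = (if k \<in> {1..<n} then c else 0)"
    by (rule sum.delta[OF finite_atLeastLessThan])
  then show ?thesis by simp
qed

lemma ones_shear_inverse:
  assumes "i < n" "k < n"
  shows "(\<Sum>j < n. ones_shear i j * ones_shear_inv j k) = diag_fun (\<lambda>_. 1) i (k :: nat)"
    and "(\<Sum>j < n. ones_shear_inv i j * ones_shear j k) = diag_fun (\<lambda>_. 1) i (k :: nat)"
proof -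
  have sum_inv: "(\<Sum>j \<in> {1..<n}. ones_shear_inv j k) = (\<Sum>j \<in> {1..<n}. if j = k then 1 else 0)"
    and sum_shear: "(\<Sum>j \<in> {1..<n}. ones_shear j k) = (\<Sum>j \<in> {1..<n}. if j = k then 1 else 0)"
    by (intro sum.cong; simp add: ones_shear_def ones_shear_inv_def)+
  show "(\<Sum>j < n. ones_shear i j * ones_shear_inv j k) = diag_fun (\<lambda>_. 1) i k"
    unfolding sum_ones_shear_row[OF assms(1)] sum_inv
    using assms by (simp add: sum_delta_atLeast1 ones_shear_def ones_shear_inv_def diag_fun_def)
  show "(\<Sum>j < n. ones_shear_inv i j * ones_shear j k) = diag_fun (\<lambda>_. 1) i k"
    unfolding sum_ones_shear_inv_row[OF assms(1)] sum_shear
    using assms by (simp add: sum_delta_atLeast1 ones_shear_def ones_shear_inv_def diag_fun_def)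
qed

lemma ones_shear_ones_triangular:
  assumes "i < n"
  shows "(\<Sum>j' < n. ones_shear i j' * ones_triangular n j' j) = (if j = 0 then 1 else 0)"
  using assms by (simp add: sum_ones_shear_row ones_triangular_def of_nat_diff)

lemma ones_triangular_similar_ones:
  assumes "i < n" "k < n"
  shows "(\<Sum>j < n. (\<Sum>j' < n. ones_shear i j' * ones_triangular n j' j) * ones_shear_inv j k) = 1"
proof -
  have "(\<Sum>j < n. (\<Sum>j' < n. ones_shear i j' * ones_triangular n j' j) * ones_shear_inv j k)
      = (\<Sum>j < n. (if j = 0 then 1 else 0) * ones_shear_inv j k)"
    using assms(1) by (intro sum.cong refl) (simp only: ones_shear_ones_triangular)
  also have "\<dots> = ones_shear_inv 0 k"
    using assms by (simp add: sum_lessThan_split_zero)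
  finally show ?thesis
    by (simp add: ones_shear_inv_def)
qed

text \<open>The columns of block_eigvecs are eigenvectors of block_mat on the indices below 6, with
  eigenvalues block_eigval.\<close>
definition block_eigvecs :: "nat \<Rightarrow> nat \<Rightarrow> complex" where
  "block_eigvecs a c = of_int ([[1, 2, 0, 2, 0, 1], [1, -1, 1, -1, -1, 1], [1, -1, -1, -1, 1, 1],
     [1, 1, -1, -1, -1, -1], [1, 1, 1, -1, 1, -1], [1, -2, 0, 2, 0, -1]] ! a ! c)"

definition block_eigvecs_inv :: "nat \<Rightarrow> nat \<Rightarrow> complex" where
  "block_eigvecs_inv a c = of_int ([[2, 2, 2, 2, 2, 2], [2, -1, -1, 1, 1, -2], [0, 3, -3, -3, 3, 0],
     [2, -1, -1, -1, -1, 2], [0, -3, 3, -3, 3, 0], [2, 2, 2, -2, -2, -2]] ! a ! c) / 12"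

definition block_eigval :: "nat \<Rightarrow> int" where
  "block_eigval a = [3, 2, 2, 0, 0, -1] ! a"

lemma less_6_cases: "a < (6 :: nat) \<longleftrightarrow> a = 0 \<or> a = 1 \<or> a = 2 \<or> a = 3 \<or> a = 4 \<or> a = 5"
  by auto

lemma sum_lessThan_6: "(\<Sum>b < (6 :: nat). h b) = h 0 + h 1 + h 2 + h 3 + h 4 + (h 5 :: 'a :: comm_monoid_add)"
  by (simp add: eval_nat_numeral lessThan_Suc ac_simps)

lemma block_eigvecs_inverse:
  assumes "a < 6" "c < 6"
  shows "(\<Sum>b < 6. block_eigvecs a b * block_eigvecs_inv b c) = diag_fun (\<lambda>_. 1) a c"
    and "(\<Sum>b < 6. block_eigvecs_inv a b * block_eigvecs b c) = diag_fun (\<lambda>_. 1) a c"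
  using assms unfolding less_6_cases
  by (elim disjE; simp add: sum_lessThan_6 block_eigvecs_def block_eigvecs_inv_def diag_fun_def)+

lemma block_mat_eigendecomposition:
  assumes "a < 6" "c < 6"
  shows "(\<Sum>b < 6. (\<Sum>b' < 6. block_eigvecs a b' * diag_fun (\<lambda>b. of_int (block_eigval b)) b' b)
            * block_eigvecs_inv b c) = block_mat a c"
  using assms unfolding less_6_cases
  by (elim disjE; simp add: sum_lessThan_6 block_eigvecs_def block_eigvecs_inv_def diag_fun_def
      block_eigval_def block_mat_def block_rel_def)+

lemma prod_lessThan_6: "(\<Prod>b < (6 :: nat). h b) = h 0 * h 1 * h 2 * h 3 * h 4 * (h 5 :: 'a :: comm_monoid_mult)"
  by (simp add: eval_nat_numeral lessThan_Suc ac_simps)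

lemma similar_mat_minus_one:
  assumes "similar_mat A (B :: 'a :: comm_ring_1 mat)" "A \<in> carrier_mat k k"
  shows "similar_mat (A - 1\<^sub>m k) (B - 1\<^sub>m k)"
proof -
  obtain m P Q where PQ: "{A, B, P, Q} \<subseteq> carrier_mat m m" "P * Q = 1\<^sub>m m" "Q * P = 1\<^sub>m m" "A = P * B * Q"
    using similar_matD[OF assms(1)] by blast
  with assms(2) have carrier: "A \<in> carrier_mat k k" "B \<in> carrier_mat k k" "P \<in> carrier_mat k k" "Q \<in> carrier_mat k k"
    and "P * Q = 1\<^sub>m k"
    by auto
  then have "P * (B - 1\<^sub>m k) * Q = A - 1\<^sub>m k"
    by (simp add: PQ(4) mult_minus_distrib_mat[of _ k k] minus_mult_distrib_mat[of _ k k])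
  with carrier PQ show ?thesis
    by (intro similar_matI[of _ _ P Q k]) auto
qed

lemma similar_ones_kron_block_mat:
  "similar_mat (kron_mat n 6 (\<lambda>_ _. 1) block_mat :: complex mat)
     (kron_mat n 6 (ones_triangular n) (diag_fun (\<lambda>b. of_int (block_eigval b))))"
proof (rule similar_matI)
  let ?P = "kron_mat n 6 ones_shear block_eigvecs" and ?Q = "kron_mat n 6 ones_shear_inv block_eigvecs_inv"
  show "?P * ?Q = 1\<^sub>m (6 * n)" "?Q * ?P = 1\<^sub>m (6 * n)"
    unfolding kron_mat_mult kron_mat_one[symmetric]
    by (intro kron_mat_cong; simp add: ones_shear_inverse block_eigvecs_inverse)+
  show "kron_mat n 6 (\<lambda>_ _. 1) block_mat
      = ?P * kron_mat n 6 (ones_triangular n) (diag_fun (\<lambda>b. of_int (block_eigval b))) * ?Q"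
    unfolding kron_mat_mult
    by (intro kron_mat_cong) (simp_all add: ones_triangular_similar_ones block_mat_eigendecomposition)
qed simp

lemma char_poly_lower_triangular:
  assumes "A \<in> carrier_mat k k" "\<And>i j. i < j \<Longrightarrow> j < k \<Longrightarrow> A $$ (i, j) = 0"
  shows "char_poly A = (\<Prod>i < k. [:- A $$ (i, i), 1:])"
proof -
  have "upper_triangular (transpose_mat A)"
    using assms by (auto simp: upper_triangular_def)
  then have "char_poly (transpose_mat A) = (\<Prod>a \<leftarrow> diag_mat (transpose_mat A). [:- a, 1:])"
    by (intro char_poly_upper_triangular[of _ k]) (use assms(1) in auto)
  also have "\<dots> = (\<Prod>i < k. [:- A $$ (i, i), 1:])"
    using assms(1) by (simp add: diag_mat_def prod.distinct_set_conv_list[symmetric] atLeast0LessThan)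
  finally show ?thesis
    using assms(1) by simp
qed

lemma char_poly_kron_ones_triangular:
  assumes "0 < n"
  shows "char_poly (kron_mat n 6 (ones_triangular n) (diag_fun (\<lambda>b. of_int (block_eigval b))) - 1\<^sub>m (6 * n))
     = (\<Prod>b < 6. [:1 - of_nat n * of_int (block_eigval b), 1:]) * [:1, 1 :: complex:] ^ (6 * (n - 1))"
    (is "char_poly ?T = _")
proof -
  have "?T $$ (p, q) = 0" if "p < q" "q < 6 * n" for p q
  proof (cases "q div 6 = 0")
    case True
    with that have "p mod 6 \<noteq> q mod 6" "p < 6 * n"
      by simp_all
    with that show ?thesis
      by (simp add: kron_mat_def diag_fun_def)
  qed (use that in \<open>simp add: kron_mat_def ones_triangular_def\<close>)
  then have "char_poly ?T = (\<Prod>p < 6 * n. [:- ?T $$ (p, p), 1:])"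
    by (intro char_poly_lower_triangular) auto
  also have "\<dots> = (\<Prod>j < n. \<Prod>b < 6. [:- ?T $$ (6 * j + b, 6 * j + b), 1:])"
    by (rule prod_lessThan_mult_nat)
  also have "\<dots> = (\<Prod>j < n. \<Prod>b < 6. [:1 - (if j = 0 then of_nat n * of_int (block_eigval b) else 0), 1:])"
  proof (intro prod.cong refl)
    fix j b assume "j \<in> {..<n}" "b \<in> {..<6 :: nat}"
    then have "6 * j + b < 6 * n" "(6 * j + b) div 6 = j" "(6 * j + b) mod 6 = b"
      by auto
    then show "[:- ?T $$ (6 * j + b, 6 * j + b), 1:]
        = [:1 - (if j = 0 then of_nat n * of_int (block_eigval b) else 0), 1:]"
      by (simp add: kron_mat_def ones_triangular_def diag_fun_def)
  qed
  also have "\<dots> = (\<Prod>b < 6. [:1 - of_nat n * of_int (block_eigval b), 1:]) * [:1, 1:] ^ (6 * (n - 1))"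
    using assms by (cases n) (simp_all del: prod.lessThan_Suc add: prod.lessThan_Suc_shift power_mult)
  finally show ?thesis .
qed

lemma char_poly_U_adj_matrix:
  assumes "0 < n"
  shows "char_poly (U_adj_matrix n (conn_set n)) =
        [:of_int (int n + 1), 1:] ^ 1
      * [:1, 1:] ^ (6 * n - 4)
      * [:- of_int (2 * int n - 1), 1:] ^ 2
      * [:- of_int (3 * int n - 1), 1:] ^ 1"
proof -
  have "similar_mat (U_adj_matrix n (conn_set n))
      (kron_mat n 6 (ones_triangular n) (diag_fun (\<lambda>b. of_int (block_eigval b))) - 1\<^sub>m (6 * n))"
    unfolding U_adj_matrix_conn_set
    by (rule similar_mat_minus_one[OF similar_ones_kron_block_mat]) simp
  then have "char_poly (U_adj_matrix n (conn_set n))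
      = (\<Prod>b < 6. [:1 - of_nat n * of_int (block_eigval b), 1:]) * [:1, 1 :: complex:] ^ (6 * (n - 1))"
    by (simp add: char_poly_similar char_poly_kron_ones_triangular[OF assms])
  also have "\<dots> = [:of_int (int n + 1), 1:] ^ 1 * [:1, 1:] ^ (6 * n - 4)
      * [:- of_int (2 * int n - 1), 1:] ^ 2 * [:- of_int (3 * int n - 1), 1:] ^ 1"
  proof -
    have factors:
      "[:1 - of_nat n * of_int (block_eigval 0), 1:] = [:- of_int (3 * int n - 1), 1 :: complex:]"
      "[:1 - of_nat n * of_int (block_eigval 1), 1:] = [:- of_int (2 * int n - 1), 1 :: complex:]"
      "[:1 - of_nat n * of_int (block_eigval 2), 1:] = [:- of_int (2 * int n - 1), 1 :: complex:]"
      "[:1 - of_nat n * of_int (block_eigval 3), 1:] = [:1, 1 :: complex:]"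
      "[:1 - of_nat n * of_int (block_eigval 4), 1:] = [:1, 1 :: complex:]"
      "[:1 - of_nat n * of_int (block_eigval 5), 1:] = [:of_int (int n + 1), 1 :: complex:]"
      by (simp_all add: block_eigval_def)
    have regroup: "a * b * b * c * c * d * c ^ m = d ^ 1 * c ^ Suc (Suc m) * b ^ 2 * a ^ 1"
      for a b c d :: "complex poly" and m
      by (simp add: power2_eq_square mult_ac)
    have "6 * n - 4 = Suc (Suc (6 * (n - 1)))"
      using assms by simp
    then show ?thesis
      unfolding prod_lessThan_6 factors by (simp only: regroup)
  qed
  finally show ?thesis .
qed

lemma root_prod_linear_in_Ints:
  assumes "poly (\<Prod>c \<leftarrow> cs. [:- of_int c, 1:]) (x :: 'a :: {idom, ring_char_0}) = 0"
  shows "x \<in> \<int>"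
  using assms by (induction cs) (auto simp: algebra_simps)

lemma eigenvalue_in_Ints_if_char_poly_splits:
  assumes "A \<in> carrier_mat k k" "char_poly A = (\<Prod>c \<leftarrow> cs. [:- of_int c, 1:])" "eigenvalue A (x :: 'a :: field_char_0)"
  shows "x \<in> \<int>"
  using assms by (intro root_prod_linear_in_Ints[of cs]) (simp add: eigenvalue_root_char_poly)

lemma eigenvalue_U_adj_matrix_in_Ints:
  assumes "0 < n" "eigenvalue (U_adj_matrix n (conn_set n)) x"
  shows "x \<in> \<int>"
proof -
  have "[:of_int (int n + 1), 1:] ^ 1 * [:1, 1:] ^ (6 * n - 4)
      * [:- of_int (2 * int n - 1), 1:] ^ 2 * [:- of_int (3 * int n - 1), 1:] ^ 1
    = (\<Prod>c \<leftarrow> [- int n - 1] @ replicate (6 * n - 4) (- 1) @ replicate 2 (2 * int n - 1) @ [3 * int n - 1].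
         [:- of_int c, 1 :: complex:])"
  proof -
    have "[:- of_int (- int n - 1), 1 :: complex:] = [:of_int (int n + 1), 1:]"
      "[:- of_int (- 1), 1 :: complex:] = [:1, 1:]"
      by simp_all
    then show ?thesis
      unfolding map_append prod_list.append map_replicate prod_list_replicate list.map
        prod_list.Cons prod_list.Nil
      by (simp only: mult.assoc mult_1_right power_one_right)
  qed
  with assms show ?thesis
    using char_poly_U_adj_matrix[OF assms(1)] eigenvalue_in_Ints_if_char_poly_splits
    unfolding U_adj_matrix_def by (metis mat_carrier)
qed

lemma cay_connected_conn_set:
  assumes "0 < n"
  shows "cay_connected (U n) (conn_set n)"
proof -
  define R where "R = {(g, h). cay_adj (U n) (conn_set n) g h}"
  have edge: "((i, j), (i', j')) \<in> R"
    if "i < 2 * n" "j < 3" "i' < 2 * n" "j' < 3" "(i, j) \<noteq> (i', j')"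
       "block_rel (U_index (i, j)) (U_index (i', j'))" for i j i' j'
    using that by (simp add: R_def cay_adj_conn_set_iff carrier_U)
  have "sym R"
    by (auto simp: R_def sym_def cay_adj_def)
  have "1 < 2 * n"
    using assms by simp
  then have "((0, 0), (1, 1)) \<in> R" "((1, 1), (0, 1)) \<in> R" "((0, 1), (1, 2)) \<in> R" "((1, 2), (0, 2)) \<in> R"
    by (simp_all add: edge block_rel_U_index)
  then have "((0, 0), (0, 1)) \<in> R\<^sup>*" "((0, 0), (0, 2)) \<in> R\<^sup>*"
    by (meson r_into_rtrancl rtrancl_into_rtrancl)+
  moreover have "j = 0 \<or> j = 1 \<or> j = 2" if "j < 3" for j :: nat
    using that by auto
  ultimately have column_0: "((0, 0), (0, j)) \<in> R\<^sup>*" if "j < 3" for j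
    using that by blast
  have reach: "((0, 0), (i, j)) \<in> R\<^sup>*" if "i < 2 * n" "j < 3" for i j
  proof (cases "i = 0")
    case False
    with that have "((0, j), (i, j)) \<in> R"
      using assms by (simp add: edge block_rel_U_index)
    with column_0[OF that(2)] show ?thesis
      by (rule rtrancl_into_rtrancl)
  qed (use that column_0 in simp)
  show ?thesis
    unfolding cay_connected_def R_def[symmetric]
  proof (intro ballI)
    fix g h assume "g \<in> carrier (U n)" "h \<in> carrier (U n)"
    then have "((0, 0), g) \<in> R\<^sup>*" "((0, 0), h) \<in> R\<^sup>*"
      using reach by (auto simp: carrier_U)
    with sym_rtrancl[OF \<open>sym R\<close>] show "(g, h) \<in> R\<^sup>*"
      by (meson rtrancl_trans symD)
  qed
qed

theorem corollary4p2:
  fixes n :: nat and S1 S2 S :: "(nat \<times> nat) set"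
  assumes "n > 1"
    and "S1 = {gen_a [^]\<^bsub>U n\<^esub> (2 * k) | k. k \<in> (UNIV :: nat set)} - {\<one>\<^bsub>U n\<^esub>}"
    and "S2 = {gen_a [^]\<^bsub>U n\<^esub> (2 * r + 1) | r. r \<le> n - 1}
            \<union> {gen_a [^]\<^bsub>U n\<^esub> (2 * r + 1) \<otimes>\<^bsub>U n\<^esub> gen_b | r. r \<le> n - 1}"
    and "S = S1 \<union> S2"
  shows "cay_connected (U n) S
    \<and> (\<forall>x. eigenvalue (U_adj_matrix n S) x \<longrightarrow> x \<in> \<int>)
    \<and> char_poly (U_adj_matrix n S) =
        [:of_int (int n + 1), 1:] ^ 1
      * [:1, 1:] ^ (6 * n - 4)
      * [:- of_int (2 * int n - 1), 1:] ^ 2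
      * [:- of_int (3 * int n - 1), 1:] ^ 1"
proof -
  have "0 < n"
    using assms(1) by simp
  then have S: "S = conn_set n"
    using assms(2-4) conn_set_eq by simp
  moreover have "\<forall>x. eigenvalue (U_adj_matrix n S) x \<longrightarrow> x \<in> \<int>"
    using eigenvalue_U_adj_matrix_in_Ints[OF \<open>0 < n\<close>] S by blast
  ultimately show ?thesis
    using cay_connected_conn_set[OF \<open>0 < n\<close>] char_poly_U_adj_matrix[OF \<open>0 < n\<close>] by simp
qed

end
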